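(* Let $q$ be a prime power and let $R$ be a finite ring containing the field $\mathbb{F}_q$ as a subring. Let $d=\dim_{\mathbb{F}_q}R$ and let $r^*$ be the number of units of $R$. If $B$ is a blocking set of the chain geometry $\Sigma(\mathbb{F}_q,R)$, then \[ \#B\ \ge\ \left\lceil\frac{2q^d-r^*}{q+1}\right\rceil . \]
   Context: All rings are associative with unit element $1\neq 0$, and subrings share the unit. $R^2$ is regarded as a left $R$-module. The projective line $\mathbb{P}(R)$ is the set of all submodules of $R^2$ of the form $R(a,b)$ where $(a\ b)$ is the first row of some invertible $2\times 2$ matrix over $R$. For a field $K\subseteq R$ (as a subring), $\mathbb{P}(K)$ is embedded in $\mathbb{P}(R)$ via $K(a,b)\mapsto R(a,b)$. The chain geometry $\Sigma(K,R)$ has point set $\mathbb{P}(R)$ and its blocks, called chains, are the sets $\mathbb{P}(K)^g$ with $g\in \mathrm{GL}_2(R)$. A blocking set is a set $B$ of points such that every chain contains at least one element of $B$. *)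

theory Defs
  imports Complex_Main "HOL-Computational_Algebra.Primes"
begin

text \<open>2x2 matrices over a ring, written as ((a,b),(c,d)) (rows).\<close>
type_synonym 'a mat2 = "('a \<times> 'a) \<times> ('a \<times> 'a)"

fun mmul2 :: "'a::ring_1 mat2 \<Rightarrow> 'a mat2 \<Rightarrow> 'a mat2" where
  "mmul2 ((a,b),(c,d)) ((e,f),(g,h)) =
     ((a*e + b*g, a*f + b*h), (c*e + d*g, c*f + d*h))"

definition id2 :: "'a::ring_1 mat2" where
  "id2 = ((1,0),(0,1))"

definition entries_in :: "'a mat2 \<Rightarrow> 'a set \<Rightarrow> bool" where
  "entries_in M S \<longleftrightarrow> fst (fst M) \<in> S \<and> snd (fst M) \<in> S \<and> fst (snd M) \<in> S \<and> snd (snd M) \<in> S"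

definition invertible_over :: "'a::ring_1 set \<Rightarrow> 'a mat2 \<Rightarrow> bool" where
  "invertible_over S M \<longleftrightarrow> entries_in M S \<and>
     (\<exists>N. entries_in N S \<and> mmul2 M N = id2 \<and> mmul2 N M = id2)"

abbreviation GL2 :: "'a::ring_1 mat2 set" where
  "GL2 \<equiv> {M. invertible_over UNIV M}"

fun vecmat :: "'a::ring_1 \<times> 'a \<Rightarrow> 'a mat2 \<Rightarrow> 'a \<times> 'a" where
  "vecmat (x,y) ((a,b),(c,d)) = (x*a + y*c, x*b + y*d)"

text \<open>The cyclic left submodule R(a,b) of R^2.\<close>
definition cyc :: "'a::ring_1 \<times> 'a \<Rightarrow> ('a \<times> 'a) set" where
  "cyc v = {(r * fst v, r * snd v) | r. True}"

text \<open>For S = UNIV this is the projective line P(R); for S = K a subfield it is the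
  image of P(K) under the embedding K(a,b) \<mapsto> R(a,b).\<close>
definition proj_line_over :: "'a::ring_1 set \<Rightarrow> ('a \<times> 'a) set set" where
  "proj_line_over S = {cyc (a,b) | a b. \<exists>c d. invertible_over S ((a,b),(c,d))}"

abbreviation proj_line :: "('a::ring_1 \<times> 'a) set set" where
  "proj_line \<equiv> proj_line_over UNIV"

definition point_act :: "('a::ring_1 \<times> 'a) set \<Rightarrow> 'a mat2 \<Rightarrow> ('a \<times> 'a) set" where
  "point_act p g = (\<lambda>v. vecmat v g) ` p"

definition chains :: "'a::ring_1 set \<Rightarrow> ('a \<times> 'a) set set set" where
  "chains K = {(\<lambda>p. point_act p g) ` proj_line_over K | g. g \<in> GL2}"

definition blocking_set :: "'a::ring_1 set \<Rightarrow> ('a \<times> 'a) set set \<Rightarrow> bool" where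
  "blocking_set K B \<longleftrightarrow> B \<subseteq> proj_line \<and> (\<forall>C \<in> chains K. C \<inter> B \<noteq> {})"

definition subfield :: "'a::ring_1 set \<Rightarrow> bool" where
  "subfield K \<longleftrightarrow> 0 \<in> K \<and> 1 \<in> K \<and>
     (\<forall>x\<in>K. \<forall>y\<in>K. x + y \<in> K \<and> x - y \<in> K \<and> x * y \<in> K \<and> x * y = y * x) \<and>
     (\<forall>x\<in>K. x \<noteq> 0 \<longrightarrow> (\<exists>y\<in>K. x * y = 1))"

definition ring_units :: "'a::ring_1 set" where
  "ring_units = {u. \<exists>v. u * v = 1 \<and> v * u = 1}"

end

theory Submission
  imports Defs
begin

text \<open>Count the elements of \<open>GL\<^sub>2(R)\<close> in two ways. Since \<open>GL\<^sub>2(R)\<close> acts transitively on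
  \<open>\<bbbP>(R)\<close>, each set \<open>{g. p\<^sup>g = b}\<close> with \<open>p, b \<in> \<bbbP>(R)\<close> has the same size \<open>s\<close>, so
  \<open>#GL\<^sub>2(R) = #\<bbbP>(R) \<cdot> s\<close>. On the other hand every \<open>g\<close> maps some point of the chain \<open>\<bbbP>(K)\<close>
  into \<open>B\<close>, whence \<open>#GL\<^sub>2(R) \<le> #\<bbbP>(K) \<cdot> #B \<cdot> s \<le> (q + 1) \<cdot> #B \<cdot> s\<close>. Finally \<open>\<bbbP>(R)\<close>
  contains the \<open>q\<^sup>d\<close> distinct points \<open>R(1,x)\<close> and the \<open>q\<^sup>d - r\<^sup>*\<close> further points \<open>R(n,1)\<close> with
  \<open>n\<close> a non-unit.\<close>

lemma mat2_cases: obtains a b c d where "A = ((a,b),(c,d))"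
  by (metis prod.exhaust)

lemma mmul2_assoc: "mmul2 (mmul2 A B) C = mmul2 A (mmul2 (B::'a::ring_1 mat2) C)"
  by (cases A rule: mat2_cases, cases B rule: mat2_cases, cases C rule: mat2_cases)
     (simp add: algebra_simps)

lemma vecmat_mmul2: "vecmat (vecmat v A) B = vecmat v (mmul2 A (B::'a::ring_1 mat2))"
  by (cases v, cases A rule: mat2_cases, cases B rule: mat2_cases) (simp add: algebra_simps)

lemma fst_mmul2: "fst (mmul2 A (B::'a::ring_1 mat2)) = vecmat (fst A) B"
  by (cases A rule: mat2_cases, cases B rule: mat2_cases) simp

lemma mmul2_id2_left [simp]: "mmul2 id2 (A::'a::ring_1 mat2) = A"
  by (cases A rule: mat2_cases) (simp add: id2_def)

lemma mmul2_id2_right [simp]: "mmul2 (A::'a::ring_1 mat2) id2 = A"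
  by (cases A rule: mat2_cases) (simp add: id2_def)

lemma vecmat_id2 [simp]: "vecmat v (id2::'a::ring_1 mat2) = v"
  by (cases v) (simp add: id2_def)

lemma GL2_iff: "(M::'a::ring_1 mat2) \<in> GL2 \<longleftrightarrow> (\<exists>N. mmul2 M N = id2 \<and> mmul2 N M = id2)"
  by (simp add: invertible_over_def entries_in_def)

definition minv :: "'a::ring_1 mat2 \<Rightarrow> 'a mat2" where
  "minv M = (SOME N. mmul2 M N = id2 \<and> mmul2 N M = id2)"

lemma
  assumes "M \<in> GL2"
  shows mmul2_minv_right: "mmul2 M (minv M) = id2"
    and mmul2_minv_left: "mmul2 (minv M) M = id2"
    and minv_GL2: "minv M \<in> GL2"
proof -
  have "mmul2 M (minv M) = id2 \<and> mmul2 (minv M) M = id2"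
    unfolding minv_def by (rule someI_ex) (use assms GL2_iff in blast)
  then show "mmul2 M (minv M) = id2" "mmul2 (minv M) M = id2" "minv M \<in> GL2"
    using GL2_iff by blast+
qed

lemma id2_GL2: "(id2::'a::ring_1 mat2) \<in> GL2"
  using GL2_iff by fastforce

lemma mmul2_GL2:
  assumes "M \<in> GL2" "N \<in> GL2"
  shows "mmul2 M N \<in> (GL2::'a::ring_1 mat2 set)"
proof -
  let ?I = "mmul2 (minv N) (minv M)"
  have "mmul2 (mmul2 M N) ?I = mmul2 M (mmul2 (mmul2 N (minv N)) (minv M))"
    by (simp only: mmul2_assoc)
  also have "\<dots> = id2"
    by (simp add: mmul2_minv_right[OF assms(1)] mmul2_minv_right[OF assms(2)])
  finally have "mmul2 (mmul2 M N) ?I = id2" .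
  moreover have "mmul2 ?I (mmul2 M N) = mmul2 (minv N) (mmul2 (mmul2 (minv M) M) N)"
    by (simp only: mmul2_assoc)
  then have "mmul2 ?I (mmul2 M N) = id2"
    by (simp add: mmul2_minv_left[OF assms(1)] mmul2_minv_left[OF assms(2)])
  ultimately show ?thesis
    unfolding GL2_iff by blast
qed

lemma cyc_mem: "(x,y) \<in> cyc (a,b) \<longleftrightarrow> (\<exists>r. x = r*a \<and> y = r*b)"
  unfolding cyc_def by auto

lemma cyc_self: "(a,b) \<in> cyc (a::'a::ring_1, b)"
  unfolding cyc_mem by (rule exI[of _ 1]) simp

lemma cyc_unit_scale:
  assumes "v * u = (1::'a::ring_1)"
  shows "cyc (u*a, u*b) = cyc (a,b)"
proof (rule set_eqI, clarify)
  have cancel: "v * (u * c) = c" for c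
    by (simp add: assms flip: mult.assoc)
  fix x y
  show "(x,y) \<in> cyc (u*a, u*b) \<longleftrightarrow> (x,y) \<in> cyc (a,b)"
    unfolding cyc_mem
  proof
    assume "\<exists>r. x = r * (u*a) \<and> y = r * (u*b)"
    then show "\<exists>r. x = r * a \<and> y = r * b"
      by (metis mult.assoc)
  next
    assume "\<exists>r. x = r * a \<and> y = r * b"
    then show "\<exists>r. x = r * (u*a) \<and> y = r * (u*b)"
      by (metis cancel mult.assoc)
  qed
qed

lemma point_act_cyc: "point_act (cyc v) g = cyc (vecmat v (g::'a::ring_1 mat2))"
proof -
  have "vecmat (r * fst v, r * snd v) g = (r * fst (vecmat v g), r * snd (vecmat v g))" for r
    by (cases v, cases g rule: mat2_cases) (simp add: algebra_simps)
  then show ?thesis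
    unfolding point_act_def cyc_def by (auto simp: image_def) metis
qed

lemma point_act_point_act: "point_act (point_act p g) h = point_act p (mmul2 g (h::'a::ring_1 mat2))"
  unfolding point_act_def by (simp add: image_image vecmat_mmul2)

lemma point_act_id2 [simp]: "point_act p (id2::'a::ring_1 mat2) = p"
  unfolding point_act_def by simp

lemma proj_line_eq_image_GL2: "(proj_line::('a::ring_1 \<times> 'a) set set) = (\<lambda>H. cyc (fst H)) ` GL2"
  unfolding proj_line_over_def by (auto simp: image_def)

lemma point_act_proj_line:
  assumes "p \<in> proj_line" "g \<in> GL2"
  shows "point_act p g \<in> (proj_line::('a::ring_1 \<times> 'a) set set)"
proof -
  obtain H where H: "H \<in> GL2" "p = cyc (fst H)"
    using assms(1) proj_line_eq_image_GL2 by blast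
  have "point_act p g = cyc (fst (mmul2 H g))"
    by (simp add: H point_act_cyc fst_mmul2)
  then show ?thesis
    using mmul2_GL2[OF H(1) assms(2)] proj_line_eq_image_GL2 by auto
qed

lemma GL2_transitive_proj_line:
  assumes "p \<in> proj_line" "p' \<in> proj_line"
  obtains M where "M \<in> (GL2::'a::ring_1 mat2 set)" "point_act p M = p'"
proof -
  obtain H where H: "H \<in> GL2" "p = cyc (fst H)"
    using assms(1) proj_line_eq_image_GL2 by blast
  obtain H' where H': "H' \<in> GL2" "p' = cyc (fst H')"
    using assms(2) proj_line_eq_image_GL2 by blast
  let ?M = "mmul2 (minv H) H'"
  have "point_act p ?M = cyc (fst (mmul2 (mmul2 H (minv H)) H'))"
    by (simp add: H point_act_cyc fst_mmul2 mmul2_assoc)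
  also have "\<dots> = p'"
    by (simp add: H' mmul2_minv_right[OF H(1)])
  finally show ?thesis
    using that mmul2_GL2[OF minv_GL2[OF H(1)] H'(1)] by blast
qed

text \<open>\<open>g \<mapsto> M g N\<close> injects the transporters from \<open>p\<close> to \<open>b\<close> into those from \<open>p'\<close> to \<open>b'\<close>,
  where \<open>M\<close> carries \<open>p'\<close> to \<open>p\<close> and \<open>N\<close> carries \<open>b\<close> to \<open>b'\<close>.\<close>
lemma card_transporter_le:
  assumes "p \<in> proj_line" "b \<in> proj_line" "p' \<in> proj_line" "b' \<in> proj_line"
  shows "card {g \<in> (GL2::'a::{ring_1,finite} mat2 set). point_act p g = b}
       \<le> card {g \<in> (GL2::'a mat2 set). point_act p' g = b'}"
proof -
  obtain M where M: "M \<in> GL2" "point_act p' M = p"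
    using GL2_transitive_proj_line assms(3,1) by blast
  obtain N where N: "N \<in> GL2" "point_act b N = b'"
    using GL2_transitive_proj_line assms(2,4) by blast
  define f where "f g = mmul2 M (mmul2 g N)" for g
  have "mmul2 (minv M) (mmul2 (f g) (minv N)) = g" for g
    unfolding f_def
    by (simp add: mmul2_assoc mmul2_minv_right[OF N(1)] flip: mmul2_assoc[of "minv M"]
        mmul2_assoc[of "mmul2 (minv M) M"] add: mmul2_minv_left[OF M(1)])
  then have "inj f"
    by (metis injI)
  moreover have "f ` {g \<in> GL2. point_act p g = b} \<subseteq> {g \<in> GL2. point_act p' g = b'}"
  proof (rule image_subsetI)
    fix g assume "g \<in> {g \<in> GL2. point_act p g = b}"
    then have g: "g \<in> GL2" "point_act p g = b" by auto
    have "f g \<in> GL2"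
      unfolding f_def using M(1) N(1) g(1) by (intro mmul2_GL2)
    moreover have "point_act p' (f g) = b'"
      unfolding f_def by (simp add: M(2) N(2) g(2) flip: point_act_point_act)
    ultimately show "f g \<in> {g \<in> GL2. point_act p' g = b'}" by blast
  qed
  ultimately show ?thesis
    by (intro card_inj_on_le[where f = f]) (auto intro: inj_on_subset)
qed

lemma card_transporter_eq:
  assumes "p \<in> proj_line" "b \<in> proj_line" "p' \<in> proj_line" "b' \<in> proj_line"
  shows "card {g \<in> (GL2::'a::{ring_1,finite} mat2 set). point_act p g = b}
       = card {g \<in> (GL2::'a mat2 set). point_act p' g = b'}"
  using card_transporter_le[OF assms] card_transporter_le[OF assms(3,4,1,2)] by (rule antisym)

lemma card_le_by_transporter_counting:
  fixes act :: "'p \<Rightarrow> 'g \<Rightarrow> 'p"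
  assumes "finite P" "e \<in> P" "s > 0" "C \<subseteq> P" "B \<subseteq> P"
    and act_closed: "\<And>g. g \<in> G \<Longrightarrow> act e g \<in> P"
    and transporters: "\<And>p b. p \<in> P \<Longrightarrow> b \<in> P \<Longrightarrow> card {g \<in> G. act p g = b} = s"
    and blocking: "\<And>g. g \<in> G \<Longrightarrow> \<exists>p \<in> C. act p g \<in> B"
  shows "card P \<le> card C * card B"
proof -
  let ?T = "\<lambda>p b. {g \<in> G. act p g = b}"
  have fin: "finite (?T p b)" if "p \<in> P" "b \<in> P" for p b
    using transporters[OF that] \<open>s > 0\<close> card_gt_0_iff by force
  have "G = (\<Union>b \<in> P. ?T e b)"
    using act_closed by blast
  then have "card G = card (\<Union>b \<in> P. ?T e b)"
    by (rule arg_cong)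
  also have "\<dots> = (\<Sum>b \<in> P. card (?T e b))"
    using \<open>finite P\<close> fin \<open>e \<in> P\<close> by (intro card_UN_disjoint) auto
  also have "\<dots> = card P * s"
    using transporters[OF \<open>e \<in> P\<close>] by simp
  finally have card_G: "card G = card P * s" .
  have "finite (C \<times> B)"
    using \<open>finite P\<close> assms(4,5) finite_subset by blast
  have "G \<subseteq> (\<Union>pb \<in> C \<times> B. ?T (fst pb) (snd pb))"
    using blocking by force
  then have "card G \<le> card (\<Union>pb \<in> C \<times> B. ?T (fst pb) (snd pb))"
    by (rule card_mono[rotated]) (use \<open>finite (C \<times> B)\<close> fin assms(4,5) in auto)
  also have "\<dots> \<le> (\<Sum>pb \<in> C \<times> B. card (?T (fst pb) (snd pb)))"
    using \<open>finite (C \<times> B)\<close> by (rule card_UN_le)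
  also have "\<dots> = (\<Sum>pb \<in> C \<times> B. s)"
    using assms(4,5) transporters by (intro sum.cong) (auto simp: subset_iff)
  also have "\<dots> = card C * card B * s"
    by (simp add: card_cartesian_product)
  finally show ?thesis
    using card_G \<open>s > 0\<close> by simp
qed

lemma proj_line_over_subset_proj_line: "proj_line_over K \<subseteq> (proj_line::('a::ring_1 \<times> 'a) set set)"
  unfolding proj_line_over_def invertible_over_def entries_in_def by blast

lemma card_proj_line_over_subfield:
  fixes K :: "'a::{ring_1,finite} set"
  assumes "subfield K"
  shows "card (proj_line_over K) \<le> card K + 1"
proof -
  have "proj_line_over K \<subseteq> insert (cyc (0,1)) ((\<lambda>t. cyc (1,t)) ` K)"
  proof
    fix p assume "p \<in> proj_line_over K"
    then obtain a b c d where p: "p = cyc (a,b)" and inv: "invertible_over K ((a,b),(c,d))"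
      unfolding proj_line_over_def by blast
    then obtain e f g h where N: "entries_in ((e,f),(g,h)) K"
      "mmul2 ((a,b),(c,d)) ((e,f),(g,h)) = id2"
      unfolding invertible_over_def by (metis mat2_cases)
    have ab: "a \<in> K" "b \<in> K" and eg: "e \<in> K" "g \<in> K"
      using inv N(1) unfolding invertible_over_def entries_in_def by auto
    have "a*e + b*g = 1"
      using N(2) by (simp add: id2_def)
    show "p \<in> insert (cyc (0,1)) ((\<lambda>t. cyc (1,t)) ` K)"
    proof (cases "a = 0")
      case True
      have "g*b = b*g"
        using assms ab eg unfolding subfield_def by blast
      with True have "g*b = 1"
        using \<open>a*e + b*g = 1\<close> by simp
      then have "p = cyc (0,1)"
        using cyc_unit_scale[of g b 0 1] p True by simp
      then show ?thesis by simp
    next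
      case False
      then obtain y where y: "y \<in> K" "a*y = 1"
        using assms ab unfolding subfield_def by blast
      moreover have "y*a = a*y"
        using assms ab y unfolding subfield_def by blast
      ultimately have "y*a = 1" by simp
      then have "p = cyc (1, y*b)"
        using cyc_unit_scale[of a y a b] y(2) p by simp
      moreover have "y*b \<in> K"
        using assms y ab unfolding subfield_def by blast
      ultimately show ?thesis by blast
    qed
  qed
  then have "card (proj_line_over K) \<le> card (insert (cyc (0,1)) ((\<lambda>t. cyc (1::'a,t)) ` K))"
    by (intro card_mono) auto
  also have "\<dots> \<le> card K + 1"
    using card_image_le[of K "\<lambda>t. cyc (1,t)"] by (simp add: card_insert_if)
  finally show ?thesis .
qed

lemma cyc_1_x_in_proj_line: "cyc (1::'a::ring_1, x) \<in> proj_line"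
proof -
  have "((1,x),(0,1)) \<in> (GL2::'a mat2 set)"
    unfolding GL2_iff by (rule exI[of _ "((1,-x),(0,1))"]) (simp add: id2_def)
  then show ?thesis
    unfolding proj_line_eq_image_GL2 by force
qed

lemma cyc_n_1_in_proj_line: "cyc (n::'a::ring_1, 1) \<in> proj_line"
proof -
  have "((n,1),(1,0)) \<in> (GL2::'a mat2 set)"
    unfolding GL2_iff by (rule exI[of _ "((0,1),(1,-n))"]) (simp add: id2_def)
  then show ?thesis
    unfolding proj_line_eq_image_GL2 by force
qed

lemma cyc_eq_imp_mem: "cyc v = cyc w \<Longrightarrow> v \<in> cyc (w::'a::ring_1 \<times> 'a)"
  by (metis cyc_self prod.exhaust)

lemma card_proj_line_ge:
  "card (UNIV::'a::{ring_1,finite} set) + card (- ring_units::'a set)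
     \<le> card (proj_line::('a \<times> 'a) set set)"
proof -
  let ?A = "range (\<lambda>x. cyc (1::'a, x))"
  let ?N = "(\<lambda>n. cyc (n::'a, 1)) ` (- ring_units)"
  have "inj (\<lambda>x. cyc (1::'a, x))" "inj (\<lambda>n. cyc (n::'a, 1))"
    by (auto intro!: injI dest!: cyc_eq_imp_mem simp: cyc_mem)
  then have "card ?A = card (UNIV::'a set)" "card ?N = card (- ring_units::'a set)"
    by (auto intro: card_image inj_on_subset)
  moreover have "?A \<inter> ?N = {}"
  proof (rule ccontr)
    assume "?A \<inter> ?N \<noteq> {}"
    then obtain x n where n: "n \<notin> ring_units" and eq: "cyc (1::'a, x) = cyc (n, 1)"
      by auto
    have "n*x = 1" "x*n = 1"
      using cyc_eq_imp_mem[OF eq] cyc_eq_imp_mem[OF eq[symmetric]] by (auto simp: cyc_mem)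
    then show False
      using n unfolding ring_units_def by blast
  qed
  moreover have "?A \<union> ?N \<subseteq> proj_line"
    using cyc_1_x_in_proj_line cyc_n_1_in_proj_line by blast
  ultimately show ?thesis
    using card_mono[of proj_line "?A \<union> ?N"] by (simp add: card_Un_disjoint)
qed

lemma card_proj_line_le_blocking_set:
  fixes K :: "'a::{ring_1,finite} set"
  assumes "subfield K" "blocking_set K B"
  shows "card (proj_line::('a \<times> 'a) set set) \<le> (card K + 1) * card B"
proof -
  let ?e = "cyc (1::'a, 0)"
  let ?s = "card {g \<in> GL2. point_act ?e g = ?e}"
  have e: "?e \<in> proj_line"
    by (rule cyc_1_x_in_proj_line)
  have "card (proj_line::('a \<times> 'a) set set) \<le> card (proj_line_over K) * card B"
  proof (rule card_le_by_transporter_counting[where act = point_act and G = GL2 and e = ?e and s = ?s])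
    have "id2 \<in> {g \<in> GL2. point_act ?e g = ?e}"
      using id2_GL2 by simp
    then show "0 < ?s"
      by (intro card_gt_0_iff[THEN iffD2] conjI) (blast, simp)
    show "B \<subseteq> proj_line"
      using assms(2) unfolding blocking_set_def by blast
    show "proj_line_over K \<subseteq> proj_line"
      by (rule proj_line_over_subset_proj_line)
    show "\<exists>p \<in> proj_line_over K. point_act p g \<in> B" if "g \<in> GL2" for g
      using assms(2) that unfolding blocking_set_def chains_def by blast
  qed (use e point_act_proj_line card_transporter_eq in auto)
  also have "\<dots> \<le> (card K + 1) * card B"
    using card_proj_line_over_subfield[OF assms(1)] by (rule mult_le_mono1)
  finally show ?thesis .
qed

theorem mainTheorem2:
  fixes K :: "'a::{ring_1, finite} set"
    and B :: "('a \<times> 'a) set set"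
    and q d :: nat
  assumes "\<exists>p k. prime p \<and> k \<ge> 1 \<and> q = p ^ k"
    and "subfield K"
    and "card K = q"
    and "card (UNIV :: 'a set) = q ^ d"
    and "blocking_set K B"
  shows "int (card B) \<ge>
           ceiling ((2 * real q ^ d - real (card (ring_units :: 'a set))) / (real q + 1))"
proof -
  have "card (ring_units :: 'a set) \<le> card (UNIV :: 'a set)"
    by (simp add: card_mono)
  then have "2 * real q ^ d - real (card (ring_units :: 'a set))
      = real (card (UNIV::'a set) + card (- ring_units :: 'a set))"
    using assms(4) by (simp add: Compl_eq_Diff_UNIV card_Diff_subset)
  also have "\<dots> \<le> real ((q + 1) * card B)"
    using card_proj_line_ge[where 'a = 'a] card_proj_line_le_blocking_set[OF assms(2,5)] assms(3)
    by (simp only: of_nat_le_iff)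
  finally have "(2 * real q ^ d - real (card (ring_units :: 'a set))) / (real q + 1) \<le> real (card B)"
    by (simp add: divide_le_eq algebra_simps add_pos_nonneg)
  then show ?thesis
    by (simp add: ceiling_le_iff)
qed

end
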